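(* Let $k\ge1$ and $a_1,\dots,a_k\in\mathbb{F}_q$, and set $(b_1,\dots,b_k):=F(a_1,\dots,a_k)$. Then, as permutations of $\mathbb{P}^1(\mathbb{F}_q)$, $$x^{q-2}\circ(x-a_k)\circ x^{q-2}\circ(x-a_{k-1})\circ\cdots\circ x^{q-2}\circ(x-a_1)=\nu(x)\circ(b_1,\infty)\circ(b_2,\infty)\circ\cdots\circ(b_k,\infty),$$ where $\nu(x):=x^{-1}\circ(x-a_k)\circ x^{-1}\circ(x-a_{k-1})\circ\cdots\circ x^{-1}\circ(x-a_1)$, which is a degree-one rational function in $\mathbb{F}_q(x)$.
   Context: Let $q>2$ be a prime power, $\mathbb{F}_q$ the field with $q$ elements, $\mathbb{P}^1(\mathbb{F}_q)=\mathbb{F}_q\cup\{\infty\}$. Degree-one rational functions in $\mathbb{F}_q(x)$ act on $\mathbb{P}^1(\mathbb{F}_q)$ with the usual conventions (e.g. $x^{-1}$ swaps $0$ and $\infty$, polynomials fix $\infty$). $x^{q-2}$ acts on $\mathbb{P}^1(\mathbb{F}_q)$ by fixing $0$ and $\infty$ and sending $c\in\mathbb{F}_q^*$ to $c^{q-2}=c^{-1}$; for $c\in\mathbb{F}_q$, $c^{q-2}$ also denotes the field element ($0^{q-2}=0$). For $b\in\mathbb{F}_q$, $(b,\infty)$ is the transposition swapping $b$ and $\infty$. Composition is $(f\circ g)(x)=f(g(x))$. The map $F:\mathbb{F}_q^k\to\mathbb{F}_q^k$ sends $(a_1,\dots,a_k)$ to $(b_1,\dots,b_k)$ where $b_i:=c_{i,i}$,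 and for each $1\le i\le k$ the elements $c_{i,j}$ ($0\le j\le i$) are defined by $c_{i,0}:=0$ and $c_{i,j}:=c_{i,j-1}^{q-2}+a_{i-j+1}$. *)

theory Defs
  imports Main "HOL-Library.Cardinality"
begin

text \<open>The projective line P^1(F_q) is modelled as 'a option: Some c is c, None is infinity.
  The finite field F_q is a type 'a of class finite field, q = CARD('a).\<close>

definition pow_q2 :: "'a::{field,finite} option \<Rightarrow> 'a option" where
  "pow_q2 y = (case y of None \<Rightarrow> None | Some c \<Rightarrow> Some (c ^ (CARD('a) - 2)))"

definition shift :: "'a::field \<Rightarrow> 'a option \<Rightarrow> 'a option" where
  "shift a y = (case y of None \<Rightarrow> None | Some c \<Rightarrow> Some (c - a))"

definition recip :: "'a::field option \<Rightarrow> 'a option" where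
  "recip y = (case y of None \<Rightarrow> Some 0 | Some c \<Rightarrow> (if c = 0 then None else Some (inverse c)))"

definition mobius :: "'a::field \<Rightarrow> 'a \<Rightarrow> 'a \<Rightarrow> 'a \<Rightarrow> 'a option \<Rightarrow> 'a option" where
  "mobius al be ga de y = (case y of
      None \<Rightarrow> (if ga = 0 then None else Some (al / ga))
    | Some c \<Rightarrow> (if ga * c + de = 0 then None else Some ((al * c + be) / (ga * c + de))))"

definition transp_inf :: "'a \<Rightarrow> 'a option \<Rightarrow> 'a option" where
  "transp_inf b y = (if y = Some b then None else if y = None then Some b else y)"

text \<open>c_{i,j} with sequence a indexed from 1: c_{i,0} = 0, c_{i,j+1} = c_{i,j}^(q-2) + a_{i-j}.\<close>
fun cF :: "(nat \<Rightarrow> 'a::{field,finite}) \<Rightarrow> nat \<Rightarrow> nat \<Rightarrow> 'a" where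
  "cF a i 0 = 0"
| "cF a i (Suc j) = (cF a i j) ^ (CARD('a) - 2) + a (i - j)"

text \<open>b_i, the i-th component of F(a_1,...,a_k) (independent of k >= i).\<close>
definition bF :: "(nat \<Rightarrow> 'a::{field,finite}) \<Rightarrow> nat \<Rightarrow> 'a" where
  "bF a i = cF a i i"

fun lhsF :: "(nat \<Rightarrow> 'a::{field,finite}) \<Rightarrow> nat \<Rightarrow> 'a option \<Rightarrow> 'a option" where
  "lhsF a 0 = id"
| "lhsF a (Suc k) = pow_q2 \<circ> shift (a (Suc k)) \<circ> lhsF a k"

fun nuF :: "(nat \<Rightarrow> 'a::field) \<Rightarrow> nat \<Rightarrow> 'a option \<Rightarrow> 'a option" where
  "nuF a 0 = id"
| "nuF a (Suc k) = recip \<circ> shift (a (Suc k)) \<circ> nuF a k"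

fun transpsF :: "(nat \<Rightarrow> 'a::{field,finite}) \<Rightarrow> nat \<Rightarrow> 'a option \<Rightarrow> 'a option" where
  "transpsF a 0 = id"
| "transpsF a (Suc k) = transpsF a k \<circ> transp_inf (bF a (Suc k))"

end

theory Submission
  imports Defs
begin

text \<open>Since q > 2, the map c \<mapsto> c^(q-2) is field inversion (with 0 \<mapsto> 0), so x^(q-2)
  acts on P^1 as x^(-1) composed with the transposition (0, \<infinity>). Writing
  h = (x - a_k) \<circ> (earlier factors), which fixes \<infinity>, the transposition (0, \<infinity>) on the left
  of h becomes (b, \<infinity>) on its right, where b is the point h sends to 0. Running the
  recursion defining c_{k,j} backwards shows that b = b_k, and induction on k gives the identity.
  Each step x^(-1) \<circ> (x - a) acts on Moebius matrices by an invertible matrix, so \<nu> stays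
  a degree-one rational function.\<close>

lemma power_card_minus_one_eq_one:
  fixes c :: "'a::{field,finite}"
  assumes "c \<noteq> 0"
  shows "c ^ (CARD('a) - 1) = 1"
proof -
  let ?S = "UNIV - {0::'a}"
  have inj: "inj_on ((*) c) ?S"
    using assms by (auto simp: inj_on_def)
  have "(*) c ` ?S = ?S"
  proof
    show "(*) c ` ?S \<subseteq> ?S" using assms by auto
    show "?S \<subseteq> (*) c ` ?S"
    proof
      fix y assume "y \<in> ?S"
      then have "y = c * (inverse c * y)" "inverse c * y \<in> ?S" using assms by auto
      then show "y \<in> (*) c ` ?S" by blast
    qed
  qed
  then have "prod id ?S = prod ((*) c) ?S"
    using prod.reindex[OF inj, of id] by simp
  also have "\<dots> = c ^ card ?S * prod id ?S"
    by (simp add: prod.distrib)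
  finally have "c ^ card ?S = 1"
    by (simp add: prod_zero_iff)
  moreover have "card ?S = CARD('a) - 1"
    by (simp add: card_Diff_singleton)
  ultimately show ?thesis by simp
qed

lemma power_card_minus_two_eq_inverse:
  fixes c :: "'a::{field,finite}"
  assumes "CARD('a) > 2"
  shows "c ^ (CARD('a) - 2) = inverse c"
proof (cases "c = 0")
  case True
  then show ?thesis using assms by simp
next
  case False
  have "CARD('a) - 1 = Suc (CARD('a) - 2)" using assms by simp
  then have "c ^ (CARD('a) - 2) * c = 1"
    using power_card_minus_one_eq_one[OF False] by (simp add: mult.commute)
  then show ?thesis using False by (simp add: field_simps)
qed

lemma pow_q2_eq_map_inverse:
  assumes "CARD('a::{field,finite}) > 2"
  shows "(pow_q2 :: 'a option \<Rightarrow> 'a option) = map_option inverse"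
  using power_card_minus_two_eq_inverse[OF assms]
  by (auto simp: pow_q2_def split: option.split)

lemma pow_q2_eq_recip_comp_transp_inf:
  assumes "CARD('a::{field,finite}) > 2"
  shows "(pow_q2 :: 'a option \<Rightarrow> 'a option) = recip \<circ> transp_inf 0"
  by (auto simp: pow_q2_eq_map_inverse[OF assms] recip_def transp_inf_def split: option.split)

lemma inj_shift: "inj (shift a)"
  by (rule injI) (auto simp: shift_def split: option.splits)

lemma inj_lhsF:
  assumes "CARD('a::{field,finite}) > 2"
  shows "inj (lhsF (a :: nat \<Rightarrow> 'a) k)"
proof (induction k)
  case 0
  then show ?case by simp
next
  case (Suc k)
  have "inj (map_option (inverse :: 'a \<Rightarrow> 'a))"
    by (rule option.inj_map) (simp add: inj_on_def)
  then show ?case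
    unfolding lhsF.simps pow_q2_eq_map_inverse[OF assms]
    by (intro inj_compose inj_shift Suc.IH)
qed

lemma lhsF_None: "lhsF a k None = None"
  by (induction k) (auto simp: pow_q2_def shift_def)

text \<open>The first j factors undo the last j steps of the recursion for c_{i,\<cdot>}.\<close>

lemma lhsF_cF:
  fixes a :: "nat \<Rightarrow> 'a::{field,finite}"
  assumes "CARD('a) > 2" and "j < i"
  shows "lhsF a j (Some (cF a i i)) = Some (cF a i (i - j))"
  using assms(2)
proof (induction j)
  case 0
  then show ?case by simp
next
  case (Suc j)
  then have "i - j = Suc (i - Suc j)" and "i - (i - Suc j) = Suc j" by simp_all
  with Suc show ?case
    by (simp add: pow_q2_eq_map_inverse[OF assms(1)] shift_def
        power_card_minus_two_eq_inverse[OF assms(1)])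
qed

lemma lhsF_bF:
  fixes a :: "nat \<Rightarrow> 'a::{field,finite}"
  assumes "CARD('a) > 2"
  shows "lhsF a k (Some (bF a (Suc k))) = Some (a (Suc k))"
  using lhsF_cF[OF assms, of k "Suc k" a] assms by (simp add: bF_def)

lemma transp_inf_conj:
  assumes "inj h" and "h None = None" and "h (Some b) = Some c"
  shows "transp_inf c \<circ> h = h \<circ> transp_inf b"
proof
  fix y
  show "(transp_inf c \<circ> h) y = (h \<circ> transp_inf b) y"
  proof (cases "y = Some b \<or> y = None")
    case True
    then show ?thesis using assms(2,3) by (auto simp: transp_inf_def)
  next
    case False
    then have "h y \<noteq> Some c" "h y \<noteq> None"
      using assms by (metis injD)+
    with False show ?thesis by (auto simp: transp_inf_def)
  qed
qed

lemma lhsF_eq_nuF_comp_transpsF: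
  fixes a :: "nat \<Rightarrow> 'a::{field,finite}"
  assumes q: "CARD('a) > 2"
  shows "lhsF a k = nuF a k \<circ> transpsF a k"
proof (induction k)
  case 0
  then show ?case by simp
next
  case (Suc k)
  define h where "h = shift (a (Suc k)) \<circ> lhsF a k"
  have "transp_inf 0 \<circ> h = h \<circ> transp_inf (bF a (Suc k))"
    by (rule transp_inf_conj)
      (simp_all add: h_def inj_compose inj_shift inj_lhsF[OF q] lhsF_None lhsF_bF[OF q] shift_def)
  then have "lhsF a (Suc k) = recip \<circ> h \<circ> transp_inf (bF a (Suc k))"
    by (simp add: pow_q2_eq_recip_comp_transp_inf[OF q] h_def comp_assoc)
  then show ?case
    using Suc.IH by (simp add: h_def comp_assoc)
qed

lemma recip_shift_mobius:
  fixes al be ga de x :: "'a::field"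
  assumes det: "al * de - be * ga \<noteq> 0"
  shows "recip (shift x (mobius al be ga de y)) = mobius ga de (al - x * ga) (be - x * de) y"
proof (cases y)
  case None
  show ?thesis
  proof (cases "ga = 0")
    case True
    then show ?thesis using None det by (simp add: mobius_def shift_def recip_def)
  next
    case False
    then have "al / ga - x = (al - x * ga) / ga" by (simp add: field_simps)
    then show ?thesis using None False by (auto simp: mobius_def shift_def recip_def)
  qed
next
  case (Some c)
  have num: "(al - x * ga) * c + (be - x * de) = al * c + be - x * (ga * c + de)"
    by (simp add: algebra_simps)
  show ?thesis
  proof (cases "ga * c + de = 0")
    case True
    text \<open>A common zero of numerator and denominator would make the determinant vanish.\<close>
    have "al * c + be \<noteq> 0"
    proof
      assume "al * c + be = 0"
      with True have "de = - ga * c" "be = - al * c"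
        by (simp_all add: algebra_simps eq_neg_iff_add_eq_0)
      with det show False by (simp add: algebra_simps)
    qed
    moreover have "(al - x * ga) * c + (be - x * de) = al * c + be"
      using num True by simp
    ultimately have "(al - x * ga) * c + (be - x * de) \<noteq> 0" by metis
    with True show ?thesis by (simp add: Some mobius_def shift_def recip_def)
  next
    case False
    then have "(al * c + be) / (ga * c + de) - x
        = ((al - x * ga) * c + (be - x * de)) / (ga * c + de)"
      by (simp add: field_simps)
    then show ?thesis using Some False by (simp add: mobius_def shift_def recip_def)
  qed
qed

lemma nuF_is_mobius:
  fixes a :: "nat \<Rightarrow> 'a::field"
  shows "\<exists>al be ga de. al * de - be * ga \<noteq> 0 \<and> nuF a k = mobius al be ga de"
proof (induction k)
  case 0
  have "id = mobius (1::'a) 0 0 1"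
    by (rule ext) (simp add: mobius_def split: option.splits)
  then show ?case by (intro exI[of _ 1] exI[of _ 0] exI[of _ 0] exI[of _ 1]) simp
next
  case (Suc k)
  then obtain al be ga de where det: "al * de - be * ga \<noteq> (0::'a)"
    and nu: "nuF a k = mobius al be ga de"
    by blast
  let ?x = "a (Suc k)"
  have "nuF a (Suc k) = mobius ga de (al - ?x * ga) (be - ?x * de)"
    by (rule ext) (simp add: nu recip_shift_mobius[OF det])
  moreover have "ga * (be - ?x * de) - de * (al - ?x * ga) \<noteq> 0"
  proof -
    have "ga * (be - ?x * de) - de * (al - ?x * ga) = - (al * de - be * ga)"
      by (simp add: algebra_simps)
    with det show ?thesis by simp
  qed
  ultimately show ?case by blast
qed

theorem theorem3p2:
  fixes a :: "nat \<Rightarrow> 'a::{field,finite}" and k :: nat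
  assumes "CARD('a) > 2" and "k \<ge> 1"
  shows "lhsF a k = nuF a k \<circ> transpsF a k
    \<and> (\<exists>al be ga de. al * de - be * ga \<noteq> 0 \<and> nuF a k = mobius al be ga de)"
  using lhsF_eq_nuF_comp_transpsF[OF assms(1)] nuF_is_mobius by blast

end
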